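(* Let $(\Omega,\mathcal F,\mu)$ be a measure space and $p\in[1,\infty]$. Then for every $k\geq 1$ the set $\mathscr G_{p,k}$ is proximinal in $L^p(\Omega,\mathcal F,\mu)$; that is, for every $f\in L^p(\Omega,\mathcal F,\mu)$ there exists $g\in\mathscr G_{p,k}$ with $\|f-g\|_p=\mathscr D_{p,k}(f)$.
   Context: All measures are assumed not identically zero. For $p\in[1,\infty]$ and $k\ge 1$, $\mathscr G_{p,k}$ denotes the set of functions of the form $\sum_{i=1}^l a_i\mathbf 1_{A_i}$ that belong to $L^p(\Omega,\mathcal F,\mu)$, where $l\le k$, $\{A_i\}_{1\le i\le l}$ is a measurable partition of $\Omega$ and $a_i\in\mathbb R$ (for $p<\infty$ this forces $a_i=0$ whenever $\mu(A_i)=\infty$). For $f\in L^p$, $\mathscr D_{p,k}(f)=\inf\{\|f-h\|_p:\ h\in\mathscr G_{p,k}\}$. A subset $K$ of a Banach space $X$ is proximinal if for every $x\in X$ the set $P_K(x)=\{y\in K:\ \|x-y\|=d(x,K)\}$ is nonempty. *)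

theory Defs
  imports "HOL-Probability.Essential_Supremum"
begin

text \<open>Exponent p ranges over [1,\<infinity>] as an ennreal.
  Membership in L^p (as a set of functions; the statement is insensitive to a.e. identification).\<close>
definition memLp :: "'a measure \<Rightarrow> ennreal \<Rightarrow> ('a \<Rightarrow> real) \<Rightarrow> bool" where
  "memLp M p f \<longleftrightarrow> f \<in> borel_measurable M \<and>
     (if p = \<infinity> then esssup M (\<lambda>x. ereal \<bar>f x\<bar>) < \<infinity>
      else integrable M (\<lambda>x. \<bar>f x\<bar> powr enn2real p))"

definition Lp_norm :: "'a measure \<Rightarrow> ennreal \<Rightarrow> ('a \<Rightarrow> real) \<Rightarrow> real" where
  "Lp_norm M p f =
     (if p = \<infinity> then real_of_ereal (esssup M (\<lambda>x. ereal \<bar>f x\<bar>))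
      else (\<integral>x. \<bar>f x\<bar> powr enn2real p \<partial>M) powr (1 / enn2real p))"

definition G_set :: "'a measure \<Rightarrow> ennreal \<Rightarrow> nat \<Rightarrow> ('a \<Rightarrow> real) set" where
  "G_set M p k = {h. memLp M p h \<and>
     (\<exists>l A a. l \<le> k \<and> (\<forall>i<l. A i \<in> sets M) \<and>
        (\<forall>i<l. \<forall>j<l. i \<noteq> j \<longrightarrow> A i \<inter> A j = {}) \<and>
        (\<Union>i<l. A i) = space M \<and>
        (\<forall>x\<in>space M. h x = (\<Sum>i<l. a i * indicator (A i) x)))}"

definition D_dist :: "'a measure \<Rightarrow> ennreal \<Rightarrow> nat \<Rightarrow> ('a \<Rightarrow> real) \<Rightarrow> real" where
  "D_dist M p k f = Inf {Lp_norm M p (\<lambda>x. f x - h x) | h. h \<in> G_set M p k}"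

end

theory Submission
  imports Defs
begin

text \<open>
  For a vector c of k candidate values put d_c(x) = min_{i<k} |f x - c_i|. A function in
  G_{p,k} takes at most k values a_i, so |f - h| dominates d_a pointwise; conversely d_c is
  realised as |f - g| by the step function g sending x to a nearest c_i. Hence D_{p,k}(f) is
  the infimum of ||d_c||_p over c, and it suffices to show that this infimum is attained.
  Along a minimizing sequence c_n pass to a subsequence on which every coordinate converges in
  the extended reals. If all coordinates escape to infinity, d_{c_n} tends to infinity
  pointwise, contradicting the bounded norms (Fatou's lemma for p < \<infinity>, the essential
  supremum bound for p = \<infinity>; here the measure must be nonzero). Otherwise d_{c_n}
  converges pointwise to d_c for a finite c, and the lower semicontinuity of the L^p norm under
  pointwise convergence, again by Fatou, shows that c is a minimizer.
\<close>

lemma Lp_norm_nonneg: "0 \<le> Lp_norm M p u"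
proof -
  let ?s = "esssup M (\<lambda>x. ereal \<bar>u x\<bar>)"
  have "?s = \<infinity> \<or> ?s = - \<infinity> \<or> 0 \<le> ?s"
  proof (cases "emeasure M (space M) = 0")
    case False
    show ?thesis
    proof (cases "(\<lambda>x. ereal \<bar>u x\<bar>) \<in> borel_measurable M")
      case True
      then have "esssup M (\<lambda>x. 0::ereal) \<le> ?s"
        by (intro esssup_mono) auto
      then show ?thesis
        using False esssup_const[of M "0::ereal"] by simp
    qed (simp add: esssup_non_measurable)
  qed (cases "(\<lambda>x. ereal \<bar>u x\<bar>) \<in> borel_measurable M";
       simp add: esssup_non_measurable esssup_zero_space)
  then show ?thesis
    by (auto simp: Lp_norm_def real_of_ereal_pos)
qed

lemma Lp_norm_cong:
  assumes "u \<in> borel_measurable M" "v \<in> borel_measurable M"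
    and "\<And>x. x \<in> space M \<Longrightarrow> \<bar>u x\<bar> = \<bar>v x\<bar>"
  shows "Lp_norm M p u = Lp_norm M p v"
proof -
  have "esssup M (\<lambda>x. ereal \<bar>u x\<bar>) = esssup M (\<lambda>x. ereal \<bar>v x\<bar>)"
    using assms by (intro esssup_AE_cong) (auto intro!: AE_I2)
  moreover have "(\<integral>x. \<bar>u x\<bar> powr enn2real p \<partial>M) = (\<integral>x. \<bar>v x\<bar> powr enn2real p \<partial>M)"
    using assms by (intro Bochner_Integration.integral_cong) auto
  ultimately show ?thesis
    unfolding Lp_norm_def by simp
qed

lemma Lp_norm_powr_eq_integral:
  assumes "p \<noteq> \<infinity>" "0 < p"
  shows "Lp_norm M p u powr enn2real p = (\<integral>x. \<bar>u x\<bar> powr enn2real p \<partial>M)"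
proof -
  have "0 < enn2real p"
    using assms by (simp add: enn2real_positive_iff less_top)
  moreover have "0 \<le> (\<integral>x. \<bar>u x\<bar> powr enn2real p \<partial>M)"
    by simp
  ultimately show ?thesis
    using assms by (simp add: Lp_norm_def powr_powr)
qed

lemma AE_le_Linf_norm:
  assumes "memLp M \<infinity> u"
  shows "AE x in M. \<bar>u x\<bar> \<le> Lp_norm M \<infinity> u"
proof -
  have "esssup M (\<lambda>x. ereal \<bar>u x\<bar>) < \<infinity>"
    using assms by (simp add: memLp_def)
  with esssup_AE[of "\<lambda>x. ereal \<bar>u x\<bar>" M] show ?thesis
    unfolding Lp_norm_def
    by (auto elim!: eventually_mono simp: ereal_le_real_iff)
qed

lemma memLp_Linf_of_AE_le:
  assumes "u \<in> borel_measurable M" "AE x in M. \<bar>u x\<bar> \<le> b"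
  shows "memLp M \<infinity> u" and "0 \<le> b \<Longrightarrow> Lp_norm M \<infinity> u \<le> b"
proof -
  have le: "esssup M (\<lambda>x. ereal \<bar>u x\<bar>) \<le> ereal b"
    using assms by (intro esssup_I) auto
  then show "memLp M \<infinity> u"
    using assms(1) by (auto simp: memLp_def intro: le_less_trans)
  show "Lp_norm M \<infinity> u \<le> b" if "0 \<le> b"
    using le that unfolding Lp_norm_def
    by (cases "esssup M (\<lambda>x. ereal \<bar>u x\<bar>)") auto
qed

lemma memLp_mono:
  assumes v: "memLp M p v" and w: "w \<in> borel_measurable M"
    and le: "\<And>x. x \<in> space M \<Longrightarrow> \<bar>w x\<bar> \<le> \<bar>v x\<bar>"
  shows "memLp M p w"
proof (cases "p = \<infinity>")
  case True
  have "AE x in M. \<bar>w x\<bar> \<le> Lp_norm M \<infinity> v"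
    using AE_le_Linf_norm[OF v[unfolded True]] AE_space
    by eventually_elim (use le in \<open>auto intro: order_trans\<close>)
  then show ?thesis
    using memLp_Linf_of_AE_le(1)[OF w] True by simp
next
  case False
  have "integrable M (\<lambda>x. \<bar>v x\<bar> powr enn2real p)"
    using v False by (simp add: memLp_def)
  then have "integrable M (\<lambda>x. \<bar>w x\<bar> powr enn2real p)"
    by (rule Bochner_Integration.integrable_bound) (use w le in \<open>auto intro!: AE_I2 powr_mono2\<close>)
  then show ?thesis
    using False w by (simp add: memLp_def)
qed

lemma powr_le_powr_sum:
  fixes a b w r :: real
  assumes "\<bar>w\<bar> \<le> \<bar>a\<bar> + \<bar>b\<bar>" "0 < r"
  shows "\<bar>w\<bar> powr r \<le> 2 powr r * (\<bar>a\<bar> powr r + \<bar>b\<bar> powr r)"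
proof -
  have "\<bar>w\<bar> powr r \<le> (2 * max \<bar>a\<bar> \<bar>b\<bar>) powr r"
    using assms by (intro powr_mono2) auto
  also have "\<dots> = 2 powr r * max \<bar>a\<bar> \<bar>b\<bar> powr r"
    by (simp add: powr_mult)
  also have "\<dots> \<le> 2 powr r * (\<bar>a\<bar> powr r + \<bar>b\<bar> powr r)"
    by (intro mult_left_mono) (auto simp: max_def)
  finally show ?thesis .
qed

lemma memLp_bounded_by_sum:
  assumes p: "0 < p" and u: "memLp M p u" and v: "memLp M p v" and w: "w \<in> borel_measurable M"
    and le: "\<And>x. x \<in> space M \<Longrightarrow> \<bar>w x\<bar> \<le> \<bar>u x\<bar> + \<bar>v x\<bar>"
  shows "memLp M p w"
proof (cases "p = \<infinity>")
  case True
  have "AE x in M. \<bar>w x\<bar> \<le> Lp_norm M \<infinity> u + Lp_norm M \<infinity> v"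
    using AE_le_Linf_norm[OF u[unfolded True]] AE_le_Linf_norm[OF v[unfolded True]] AE_space
    by eventually_elim (use le in force)
  then show ?thesis
    using memLp_Linf_of_AE_le(1)[OF w] True by simp
next
  case False
  define r where "r = enn2real p"
  have r: "0 < r"
    using p False by (simp add: r_def enn2real_positive_iff less_top)
  have "integrable M (\<lambda>x. 2 powr r * (\<bar>u x\<bar> powr r + \<bar>v x\<bar> powr r))"
    using u v False by (simp add: memLp_def r_def)
  then have "integrable M (\<lambda>x. \<bar>w x\<bar> powr r)"
    by (rule Bochner_Integration.integrable_bound)
      (use w le r in \<open>auto intro!: AE_I2 powr_le_powr_sum\<close>)
  then show ?thesis
    using False w by (simp add: memLp_def r_def)
qed

lemma Lp_norm_mono:
  assumes v: "memLp M p v" and w: "w \<in> borel_measurable M"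
    and le: "\<And>x. x \<in> space M \<Longrightarrow> \<bar>w x\<bar> \<le> \<bar>v x\<bar>"
  shows "Lp_norm M p w \<le> Lp_norm M p v"
proof (cases "p = \<infinity>")
  case True
  have "AE x in M. \<bar>w x\<bar> \<le> Lp_norm M \<infinity> v"
    using AE_le_Linf_norm[OF v[unfolded True]] AE_space
    by eventually_elim (use le in \<open>auto intro: order_trans\<close>)
  then show ?thesis
    using memLp_Linf_of_AE_le(2)[OF w _ Lp_norm_nonneg] True by simp
next
  case False
  have "integrable M (\<lambda>x. \<bar>v x\<bar> powr enn2real p)" "integrable M (\<lambda>x. \<bar>w x\<bar> powr enn2real p)"
    using v memLp_mono[OF v w le] False by (simp_all add: memLp_def)
  then have "(\<integral>x. \<bar>w x\<bar> powr enn2real p \<partial>M) \<le> (\<integral>x. \<bar>v x\<bar> powr enn2real p \<partial>M)"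
    using le by (intro integral_mono) (auto intro!: powr_mono2)
  then show ?thesis
    using False unfolding Lp_norm_def by (auto intro!: powr_mono2)
qed

lemma nn_integral_liminf_powr_le:
  assumes p: "p \<noteq> \<infinity>" "0 < p" and u: "\<And>n. memLp M p (u n)"
    and bound: "eventually (\<lambda>n. Lp_norm M p (u n) \<le> b) sequentially"
  shows "(\<integral>\<^sup>+ x. liminf (\<lambda>n. ennreal (\<bar>u n x\<bar> powr enn2real p)) \<partial>M) \<le> ennreal (b powr enn2real p)"
proof -
  have [measurable]: "u n \<in> borel_measurable M" for n
    using u by (simp add: memLp_def)
  have norm_powr: "(\<integral>\<^sup>+ x. ennreal (\<bar>u n x\<bar> powr enn2real p) \<partial>M) = ennreal (Lp_norm M p (u n) powr enn2real p)"
    for n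
    using u[of n] p by (simp add: memLp_def nn_integral_eq_integral Lp_norm_powr_eq_integral)
  have "(\<integral>\<^sup>+ x. liminf (\<lambda>n. ennreal (\<bar>u n x\<bar> powr enn2real p)) \<partial>M)
      \<le> liminf (\<lambda>n. \<integral>\<^sup>+ x. ennreal (\<bar>u n x\<bar> powr enn2real p) \<partial>M)"
    by (rule nn_integral_liminf) measurable
  also have "\<dots> \<le> liminf (\<lambda>n. ennreal (b powr enn2real p))"
    unfolding norm_powr using bound
    by (intro Liminf_mono) (auto elim!: eventually_mono intro!: ennreal_leI powr_mono2 Lp_norm_nonneg)
  finally show ?thesis
    by (simp add: Liminf_const)
qed

lemma Lp_norm_le_of_nn_integral_le:
  assumes p: "p \<noteq> \<infinity>" "0 < p" and v: "v \<in> borel_measurable M" and b: "0 \<le> b"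
    and nn: "(\<integral>\<^sup>+ x. ennreal (\<bar>v x\<bar> powr enn2real p) \<partial>M) \<le> ennreal (b powr enn2real p)"
  shows "memLp M p v \<and> Lp_norm M p v \<le> b"
proof -
  have q: "0 < enn2real p"
    using p by (simp add: enn2real_positive_iff less_top)
  have int: "integrable M (\<lambda>x. \<bar>v x\<bar> powr enn2real p)"
    using nn v by (intro integrableI_bounded) (auto simp: top.not_eq_extremum intro: le_less_trans)
  with nn have "Lp_norm M p v powr enn2real p \<le> b powr enn2real p"
    by (simp add: nn_integral_eq_integral Lp_norm_powr_eq_integral[OF p])
  then have "Lp_norm M p v \<le> b"
    using q b powr_less_mono2[of "enn2real p" b "Lp_norm M p v"] by (meson not_le)
  then show ?thesis
    using int v p by (simp add: memLp_def)
qed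

lemma AE_eventually_le_of_Linf_norm_le:
  assumes u: "\<And>n. memLp M \<infinity> (u n)"
    and bound: "eventually (\<lambda>n. Lp_norm M \<infinity> (u n) \<le> b) sequentially"
  shows "AE x in M. eventually (\<lambda>n. \<bar>u n x\<bar> \<le> b) sequentially"
proof -
  have "AE x in M. \<forall>n. \<bar>u n x\<bar> \<le> Lp_norm M \<infinity> (u n)"
    using AE_le_Linf_norm[OF u] by (simp add: AE_all_countable)
  then show ?thesis
  proof eventually_elim
    case (elim x)
    from bound show ?case
      by eventually_elim (use elim in \<open>auto intro: order_trans\<close>)
  qed
qed

lemma filterlim_abs_powr_at_top:
  fixes f :: "'b \<Rightarrow> real"
  assumes "0 < q" "filterlim f at_top F"
  shows "filterlim (\<lambda>x. \<bar>f x\<bar> powr q) at_top F"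
  unfolding filterlim_at_top
proof
  fix Z :: real
  have "eventually (\<lambda>x. max 0 Z powr (1 / q) \<le> f x) F"
    using assms(2) by (simp add: filterlim_at_top)
  then show "eventually (\<lambda>x. Z \<le> \<bar>f x\<bar> powr q) F"
  proof eventually_elim
    case (elim x)
    have "max 0 Z = (max 0 Z powr (1 / q)) powr q"
      using assms(1) by (simp add: powr_powr)
    also have "\<dots> \<le> \<bar>f x\<bar> powr q"
      using elim assms(1) by (intro powr_mono2) auto
    finally show ?case
      by linarith
  qed
qed

lemma Lp_norm_le_of_eventually_le:
  assumes p: "0 < p" and u: "\<And>n. memLp M p (u n)"
    and lim: "\<And>x. x \<in> space M \<Longrightarrow> (\<lambda>n. u n x) \<longlonglongrightarrow> v x"
    and bound: "eventually (\<lambda>n. Lp_norm M p (u n) \<le> b) sequentially"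
  shows "memLp M p v \<and> Lp_norm M p v \<le> b"
proof -
  have [measurable]: "u n \<in> borel_measurable M" for n
    using u by (simp add: memLp_def)
  have v [measurable]: "v \<in> borel_measurable M"
    by (rule borel_measurable_LIMSEQ_real[OF lim]) measurable
  obtain n where "Lp_norm M p (u n) \<le> b"
    using bound by (auto simp: eventually_sequentially)
  then have b: "0 \<le> b"
    using Lp_norm_nonneg order_trans by blast
  show ?thesis
  proof (cases "p = \<infinity>")
    case True
    have "AE x in M. \<bar>v x\<bar> \<le> b"
      using AE_eventually_le_of_Linf_norm_le[OF u[unfolded True] bound[unfolded True]] AE_space
    proof eventually_elim
      case (elim x)
      show ?case
        using lim[OF elim(2)] elim(1) by (intro tendsto_upperbound[OF tendsto_rabs]) auto
    qed
    then show ?thesis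
      using memLp_Linf_of_AE_le[OF v] b True by simp
  next
    case False
    define q where "q = enn2real p"
    have q: "0 < q"
      using p False by (simp add: q_def enn2real_positive_iff less_top)
    have "(\<lambda>n. ennreal (\<bar>u n x\<bar> powr q)) \<longlonglongrightarrow> ennreal (\<bar>v x\<bar> powr q)" if "x \<in> space M" for x
      using lim[OF that] q by (intro tendsto_ennrealI tendsto_powr' tendsto_rabs) auto
    then have "(\<integral>\<^sup>+ x. ennreal (\<bar>v x\<bar> powr q) \<partial>M)
        = (\<integral>\<^sup>+ x. liminf (\<lambda>n. ennreal (\<bar>u n x\<bar> powr q)) \<partial>M)"
      by (intro nn_integral_cong lim_imp_Liminf[symmetric]) auto
    also have "\<dots> \<le> ennreal (b powr q)"
      unfolding q_def by (rule nn_integral_liminf_powr_le[OF False p u bound])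
    finally show ?thesis
      unfolding q_def by (rule Lp_norm_le_of_nn_integral_le[OF False p v b])
  qed
qed

lemma Lp_norm_unbounded_of_tendsto_at_top:
  assumes M0: "emeasure M (space M) \<noteq> 0" and p: "0 < p" and u: "\<And>n. memLp M p (u n)"
    and lim: "\<And>x. x \<in> space M \<Longrightarrow> filterlim (\<lambda>n. u n x) at_top sequentially"
  shows "\<not> eventually (\<lambda>n. Lp_norm M p (u n) \<le> b) sequentially"
proof
  assume bound: "eventually (\<lambda>n. Lp_norm M p (u n) \<le> b) sequentially"
  show False
  proof (cases "p = \<infinity>")
    case True
    have "AE x in M. False"
      using AE_eventually_le_of_Linf_norm_le[OF u[unfolded True] bound[unfolded True]] AE_space
    proof eventually_elim
      case (elim x)
      have "eventually (\<lambda>n. b < u n x) sequentially"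
        using lim[OF elim(2)] by (simp add: filterlim_at_top_dense)
      with elim(1) have "eventually (\<lambda>n. False) sequentially"
        by eventually_elim linarith
      then show False
        by simp
    qed
    then show False
      using M0 ae_filter_eq_bot_iff[of M] by (simp add: eventually_False)
  next
    case False
    define q where "q = enn2real p"
    have "(\<lambda>n. ennreal (\<bar>u n x\<bar> powr q)) \<longlonglongrightarrow> top" if "x \<in> space M" for x
      using p False lim[OF that]
      by (simp add: q_def ennreal_tendsto_top_eq_at_top filterlim_abs_powr_at_top enn2real_positive_iff less_top)
    then have "(\<integral>\<^sup>+ x. top \<partial>M) = (\<integral>\<^sup>+ x. liminf (\<lambda>n. ennreal (\<bar>u n x\<bar> powr q)) \<partial>M)"
      by (intro nn_integral_cong lim_imp_Liminf[symmetric]) auto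
    also have "\<dots> \<le> ennreal (b powr q)"
      unfolding q_def by (rule nn_integral_liminf_powr_le[OF False p u bound])
    finally show False
      using M0 by (simp add: ennreal_top_mult top_unique)
  qed
qed

definition nearest_dist :: "(nat \<Rightarrow> real) \<Rightarrow> nat \<Rightarrow> real \<Rightarrow> real" where
  "nearest_dist c k y = Min ((\<lambda>i. \<bar>y - c i\<bar>) ` {..<k})"

definition nearest_index :: "(nat \<Rightarrow> real) \<Rightarrow> nat \<Rightarrow> real \<Rightarrow> nat" where
  "nearest_index c k y = (LEAST i. i < k \<and> \<bar>y - c i\<bar> = nearest_dist c k y)"

lemma nearest_dist_le: "i < k \<Longrightarrow> nearest_dist c k y \<le> \<bar>y - c i\<bar>"
  unfolding nearest_dist_def by (intro Min_le) auto

lemma nearest_dist_nonneg: "0 < k \<Longrightarrow> 0 \<le> nearest_dist c k y"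
  unfolding nearest_dist_def by (subst Min_ge_iff) auto

lemma nearest_index_correct:
  assumes "0 < k"
  shows "nearest_index c k y < k \<and> \<bar>y - c (nearest_index c k y)\<bar> = nearest_dist c k y"
proof -
  have "nearest_dist c k y \<in> (\<lambda>i. \<bar>y - c i\<bar>) ` {..<k}"
    unfolding nearest_dist_def using assms by (intro Min_in) auto
  then have "\<exists>i. i < k \<and> \<bar>y - c i\<bar> = nearest_dist c k y"
    by auto
  then show ?thesis
    unfolding nearest_index_def by (rule LeastI_ex)
qed

lemma borel_measurable_nearest_dist [measurable]:
  "f \<in> borel_measurable M \<Longrightarrow> (\<lambda>x. nearest_dist c k (f x)) \<in> borel_measurable M"
  unfolding nearest_dist_def by (intro borel_measurable_Min) auto

lemma measurable_nearest_index [measurable]: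
  "f \<in> borel_measurable M \<Longrightarrow> (\<lambda>x. nearest_index c k (f x)) \<in> M \<rightarrow>\<^sub>M count_space UNIV"
  unfolding nearest_index_def by (rule measurable_Least) measurable

lemma sum_indicator_partition:
  fixes a :: "nat \<Rightarrow> real"
  assumes "j < l" "x \<in> A j" and disj: "\<forall>i<l. \<forall>i'<l. i \<noteq> i' \<longrightarrow> A i \<inter> A i' = {}"
  shows "(\<Sum>i<l. a i * indicator (A i) x) = a j"
proof -
  have "(\<Sum>i<l. a i * indicator (A i) x) = (\<Sum>i\<in>{j}. a i * indicator (A i) x)"
    by (rule sum.mono_neutral_right) (use assms in \<open>auto simp: indicator_def\<close>)
  then show ?thesis
    using assms by simp
qed

lemma G_set_values:
  assumes "h \<in> G_set M p k"
  shows "\<exists>a. \<forall>x\<in>space M. \<exists>i<k. h x = a i"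
proof -
  obtain l A a where "memLp M p h" "l \<le> k" "\<forall>i<l. A i \<in> sets M"
    and disj: "\<forall>i<l. \<forall>j<l. i \<noteq> j \<longrightarrow> A i \<inter> A j = {}"
    and cover: "(\<Union>i<l. A i) = space M"
    and h: "\<forall>x\<in>space M. h x = (\<Sum>i<l. a i * indicator (A i) x)"
    using assms unfolding G_set_def mem_Collect_eq by (elim conjE exE) (intro that)
  have "\<exists>i<k. h x = a i" if "x \<in> space M" for x
  proof -
    have "x \<in> (\<Union>i<l. A i)"
      using that cover by simp
    then obtain j where j: "j < l" "x \<in> A j"
      by blast
    then have "h x = a j"
      using h that sum_indicator_partition[OF j disj] by simp
    then show ?thesis
      using j \<open>l \<le> k\<close> by (intro exI[of _ j]) auto
  qed
  then show ?thesis
    by blast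
qed

lemma G_set_comp_index:
  assumes "memLp M p (\<lambda>x. a (e x))" "e \<in> M \<rightarrow>\<^sub>M count_space UNIV"
    and "\<And>x. x \<in> space M \<Longrightarrow> e x < k"
  shows "(\<lambda>x. a (e x)) \<in> G_set M p k"
proof -
  define A where "A i = e -` {i} \<inter> space M" for i
  have sets: "\<forall>i<k. A i \<in> sets M"
    unfolding A_def using assms(2) by (auto intro: measurable_sets)
  have disj: "\<forall>i<k. \<forall>j<k. i \<noteq> j \<longrightarrow> A i \<inter> A j = {}"
    by (auto simp: A_def)
  have cover: "(\<Union>i<k. A i) = space M"
    using assms(3) by (auto simp: A_def)
  have sum: "\<forall>x\<in>space M. a (e x) = (\<Sum>i<k. a i * indicator (A i) x)"
    using sum_indicator_partition[OF assms(3) _ disj] by (simp add: A_def)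
  show ?thesis
    unfolding G_set_def using assms(1) sets disj cover sum
    by (intro CollectI conjI exI[of _ k] exI[of _ A] exI[of _ a]) auto
qed

lemma convergent_subseq_coordinates:
  fixes X :: "nat \<Rightarrow> nat \<Rightarrow> 'a::{complete_linorder, linorder_topology}"
  shows "\<exists>r L. strict_mono r \<and> (\<forall>i<k. (\<lambda>n. X (r n) i) \<longlonglongrightarrow> L i)"
proof (induction k)
  case 0
  show ?case
    using strict_mono_id by blast
next
  case (Suc k)
  then obtain r L where r: "strict_mono r" and L: "\<forall>i<k. (\<lambda>n. X (r n) i) \<longlonglongrightarrow> L i"
    by blast
  obtain l t where t: "strict_mono t" and l: "((\<lambda>n. X (r n) k) \<circ> t) \<longlonglongrightarrow> l"
    using compact_complete_linorder by blast
  have "(\<lambda>n. X (r (t n)) i) \<longlonglongrightarrow> (L(k := l)) i" if "i < Suc k" for i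
  proof (cases "i = k")
    case False
    then have "((\<lambda>n. X (r n) i) \<circ> t) \<longlonglongrightarrow> L i"
      using L t that by (intro LIMSEQ_subseq_LIMSEQ) auto
    then show ?thesis
      using False by (simp add: comp_def)
  qed (use l in \<open>simp add: comp_def\<close>)
  moreover have "strict_mono (r \<circ> t)"
    using r t by (rule strict_mono_o)
  ultimately show ?case
    by (intro exI[of _ "r \<circ> t"] exI[of _ "L(k := l)"]) (simp add: comp_def)
qed

lemma tendsto_Min_image:
  fixes X :: "'b \<Rightarrow> 'i \<Rightarrow> 'a::linorder_topology"
  assumes "finite S" "S \<noteq> {}" "\<And>i. i \<in> S \<Longrightarrow> ((\<lambda>n. X n i) \<longlongrightarrow> l i) F"
  shows "((\<lambda>n. Min (X n ` S)) \<longlongrightarrow> Min (l ` S)) F"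
  using assms by (induction S rule: finite_ne_induct) (auto intro: tendsto_min)

lemma tendsto_nearest_dist_ereal:
  assumes "0 < k" and lim: "\<And>i. i < k \<Longrightarrow> (\<lambda>n. ereal (c n i)) \<longlonglongrightarrow> L i"
  shows "(\<lambda>n. ereal (nearest_dist (c n) k y)) \<longlonglongrightarrow> Min ((\<lambda>i. \<bar>ereal y - L i\<bar>) ` {..<k})"
proof -
  have "ereal (nearest_dist (c n) k y) = Min ((\<lambda>i. \<bar>ereal y - ereal (c n i)\<bar>) ` {..<k})" for n
    unfolding nearest_dist_def using assms
    by (subst mono_Min_commute[where f = ereal]) (auto simp: mono_def image_image)
  moreover have "(\<lambda>n. Min ((\<lambda>i. \<bar>ereal y - ereal (c n i)\<bar>) ` {..<k})) \<longlonglongrightarrow> Min ((\<lambda>i. \<bar>ereal y - L i\<bar>) ` {..<k})"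
    using assms by (intro tendsto_Min_image tendsto_abs_ereal tendsto_diff_ereal_general) auto
  ultimately show ?thesis
    by simp
qed

lemma nearest_dist_tendsto_at_top:
  assumes "0 < k" and lim: "\<And>i. i < k \<Longrightarrow> (\<lambda>n. ereal (c n i)) \<longlonglongrightarrow> L i"
    and "\<And>i. i < k \<Longrightarrow> \<bar>L i\<bar> = \<infinity>"
  shows "filterlim (\<lambda>n. nearest_dist (c n) k y) at_top sequentially"
proof -
  have "(\<lambda>i. \<bar>ereal y - L i\<bar>) ` {..<k} = {\<infinity>}"
    using assms(1,3) by (force simp: image_iff)
  then have "(\<lambda>n. ereal (nearest_dist (c n) k y)) \<longlonglongrightarrow> \<infinity>"
    using tendsto_nearest_dist_ereal[where c = c and L = L and y = y, OF assms(1) lim] by simp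
  then show ?thesis
    by (simp add: tendsto_PInfty_eq_at_top)
qed

lemma nearest_dist_tendsto_finite:
  assumes "0 < k" and lim: "\<And>i. i < k \<Longrightarrow> (\<lambda>n. ereal (c n i)) \<longlonglongrightarrow> L i"
    and i0: "i0 < k" "\<bar>L i0\<bar> \<noteq> \<infinity>"
  defines "c' \<equiv> \<lambda>i. real_of_ereal (if \<bar>L i\<bar> = \<infinity> then L i0 else L i)"
  shows "(\<lambda>n. nearest_dist (c n) k y) \<longlonglongrightarrow> nearest_dist c' k y"
proof -
  let ?T = "\<lambda>i. \<bar>ereal y - L i\<bar>" and ?S = "\<lambda>i. ereal \<bar>y - c' i\<bar>"
  have S_le_T: "?S i \<le> ?T i" for i
    by (cases "L i") (auto simp: c'_def)
  have S_eq: "?S i = (if \<bar>L i\<bar> = \<infinity> then ?T i0 else ?T i)" for i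
    using i0 by (cases "L i"; cases "L i0") (auto simp: c'_def)
  have "Min (?S ` {..<k}) \<le> Min (?T ` {..<k})"
    using assms(1) S_le_T by (subst Min_ge_iff) (auto intro: order_trans[OF Min_le])
  moreover have "Min (?T ` {..<k}) \<le> Min (?S ` {..<k})"
    using assms(1) i0(1) S_eq by (subst Min_ge_iff) (auto intro!: Min_le)
  moreover have "ereal (nearest_dist c' k y) = Min (?S ` {..<k})"
    unfolding nearest_dist_def using assms(1)
    by (subst mono_Min_commute[where f = ereal]) (auto simp: mono_def image_image)
  ultimately have "Min (?T ` {..<k}) = ereal (nearest_dist c' k y)"
    by simp
  then show ?thesis
    using tendsto_nearest_dist_ereal[where c = c and L = L and y = y, OF assms(1) lim] by simp
qed

lemma Lp_norm_le_of_tendsto: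
  assumes p: "0 < p" and u: "\<And>n. memLp M p (u n)"
    and lim: "\<And>x. x \<in> space M \<Longrightarrow> (\<lambda>n. u n x) \<longlonglongrightarrow> v x"
    and norm_lim: "(\<lambda>n. Lp_norm M p (u n)) \<longlonglongrightarrow> m"
  shows "memLp M p v \<and> Lp_norm M p v \<le> m"
proof -
  have le: "memLp M p v \<and> Lp_norm M p v \<le> m + e" if "0 < e" for e
  proof (rule Lp_norm_le_of_eventually_le[OF p u lim])
    show "eventually (\<lambda>n. Lp_norm M p (u n) \<le> m + e) sequentially"
      using order_tendstoD(2)[OF norm_lim, of "m + e"] that by (auto elim: eventually_mono)
  qed
  show ?thesis
    using le[of 1] le by (auto intro: field_le_epsilon)
qed

lemma minimizing_sequence:
  fixes g :: "'b \<Rightarrow> real"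
  assumes "S \<noteq> {}" "bdd_below (g ` S)"
  shows "\<exists>x. (\<forall>n. x n \<in> S) \<and> (\<lambda>n. g (x n)) \<longlonglongrightarrow> Inf (g ` S)"
proof -
  let ?m = "Inf (g ` S)"
  have "\<exists>y\<in>S. g y < ?m + inverse (real (Suc n))" for n
    using cInf_less_iff[of "g ` S" "?m + inverse (real (Suc n))"] assms by auto
  then obtain x where x: "\<And>n. x n \<in> S" "\<And>n. g (x n) < ?m + inverse (real (Suc n))"
    by metis
  have "(\<lambda>n. g (x n)) \<longlonglongrightarrow> ?m"
  proof (rule tendsto_sandwich[OF _ _ tendsto_const LIMSEQ_inverse_real_of_nat_add])
    show "eventually (\<lambda>n. ?m \<le> g (x n)) sequentially"
      using x(1) assms(2) by (intro always_eventually allI cInf_lower) auto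
    show "eventually (\<lambda>n. g (x n) \<le> ?m + inverse (real (Suc n))) sequentially"
      using x(2) by (intro always_eventually allI less_imp_le)
  qed
  then show ?thesis
    using x(1) by blast
qed

lemma nearest_values_le_lim:
  assumes M0: "emeasure M (space M) \<noteq> 0" and p: "0 < p" and k: "0 < k"
    and c: "\<And>n. memLp M p (\<lambda>x. nearest_dist (c n) k (f x))"
    and c_lim: "(\<lambda>n. Lp_norm M p (\<lambda>x. nearest_dist (c n) k (f x))) \<longlonglongrightarrow> m"
  shows "\<exists>c'. memLp M p (\<lambda>x. nearest_dist c' k (f x)) \<and> Lp_norm M p (\<lambda>x. nearest_dist c' k (f x)) \<le> m"
proof -
  define d where "d c = (\<lambda>x. nearest_dist c k (f x))" for c
  obtain r L where r: "strict_mono r" and L: "\<forall>i<k. (\<lambda>n. ereal (c (r n) i)) \<longlonglongrightarrow> L i"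
    using convergent_subseq_coordinates[where X = "\<lambda>n i. ereal (c n i)"] by blast
  have u: "memLp M p (d (c (r n)))" for n
    using c by (simp add: d_def)
  have u_lim: "(\<lambda>n. Lp_norm M p (d (c (r n)))) \<longlonglongrightarrow> m"
    using LIMSEQ_subseq_LIMSEQ[OF c_lim r] by (simp add: comp_def d_def)
  have "\<exists>i0<k. \<bar>L i0\<bar> \<noteq> \<infinity>"
  proof (rule ccontr)
    assume "\<not> ?thesis"
    then have "\<And>x. filterlim (\<lambda>n. d (c (r n)) x) at_top sequentially"
      unfolding d_def using k L by (intro nearest_dist_tendsto_at_top) auto
    then have "\<not> eventually (\<lambda>n. Lp_norm M p (d (c (r n))) \<le> m + 1) sequentially"
      using M0 p u by (intro Lp_norm_unbounded_of_tendsto_at_top) auto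
    moreover have "eventually (\<lambda>n. Lp_norm M p (d (c (r n))) \<le> m + 1) sequentially"
      using order_tendstoD(2)[OF u_lim less_add_one] by eventually_elim simp
    ultimately show False
      by contradiction
  qed
  then obtain i0 where i0: "i0 < k" "\<bar>L i0\<bar> \<noteq> \<infinity>"
    by auto
  \<comment> \<open>Coordinates escaping to infinity are eventually never the nearest value; they are
    replaced by a finite limit value, which leaves the limiting distance unchanged.\<close>
  define c' where "c' i = real_of_ereal (if \<bar>L i\<bar> = \<infinity> then L i0 else L i)" for i
  have "(\<lambda>n. d (c (r n)) x) \<longlonglongrightarrow> d c' x" for x
    unfolding d_def c'_def using k L i0 by (intro nearest_dist_tendsto_finite) auto
  then have "memLp M p (d c') \<and> Lp_norm M p (d c') \<le> m"
    by (rule Lp_norm_le_of_tendsto[OF p u _ u_lim])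
  then show ?thesis
    unfolding d_def by blast
qed

lemma exists_optimal_nearest_values:
  assumes M0: "emeasure M (space M) \<noteq> 0" and p: "0 < p" and k: "0 < k" and f: "memLp M p f"
  shows "\<exists>c. memLp M p (\<lambda>x. nearest_dist c k (f x)) \<and>
    (\<forall>c'. memLp M p (\<lambda>x. nearest_dist c' k (f x)) \<longrightarrow>
      Lp_norm M p (\<lambda>x. nearest_dist c k (f x)) \<le> Lp_norm M p (\<lambda>x. nearest_dist c' k (f x)))"
proof -
  define d where "d c = (\<lambda>x. nearest_dist c k (f x))" for c
  define C where "C = {c. memLp M p (d c)}"
  define m where "m = Inf ((\<lambda>c. Lp_norm M p (d c)) ` C)"
  have [measurable]: "f \<in> borel_measurable M"
    using f by (simp add: memLp_def)
  have "(\<lambda>_. 0) \<in> C"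
    unfolding C_def d_def using nearest_dist_nonneg[OF k] nearest_dist_le[OF k, of "\<lambda>_. 0"]
    by (intro CollectI memLp_mono[OF f]) auto
  moreover have bdd: "bdd_below ((\<lambda>c. Lp_norm M p (d c)) ` C)"
    using Lp_norm_nonneg by (intro bdd_belowI) auto
  ultimately obtain c where "\<And>n. c n \<in> C" and "(\<lambda>n. Lp_norm M p (d (c n))) \<longlonglongrightarrow> m"
    unfolding m_def using minimizing_sequence[of C] by blast
  then obtain c' where c': "memLp M p (d c')" "Lp_norm M p (d c') \<le> m"
    using nearest_values_le_lim[OF M0 p k] unfolding C_def d_def by blast
  have "m \<le> Lp_norm M p (d c'')" if "memLp M p (d c'')" for c''
    unfolding m_def using that bdd by (intro cInf_lower) (auto simp: C_def)
  then show ?thesis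
    using c' unfolding d_def by (meson order_trans)
qed

lemma nearest_value_approximant:
  assumes p: "0 < p" and k: "0 < k" and f: "memLp M p f"
    and c: "memLp M p (\<lambda>x. nearest_dist c k (f x))"
  defines "g \<equiv> \<lambda>x. c (nearest_index c k (f x))"
  shows "g \<in> G_set M p k"
    and "Lp_norm M p (\<lambda>x. f x - g x) = Lp_norm M p (\<lambda>x. nearest_dist c k (f x))"
proof -
  have [measurable]: "f \<in> borel_measurable M"
    using f by (simp add: memLp_def)
  have g_meas [measurable]: "g \<in> borel_measurable M"
    unfolding g_def by measurable
  have g_dist: "\<bar>f x - g x\<bar> = nearest_dist c k (f x)" for x
    unfolding g_def using nearest_index_correct[OF k] by simp
  have "\<bar>g x\<bar> \<le> \<bar>f x\<bar> + \<bar>nearest_dist c k (f x)\<bar>" for x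
    using g_dist[of x] by arith
  then have "memLp M p g"
    by (intro memLp_bounded_by_sum[OF p f c g_meas])
  then show "g \<in> G_set M p k"
    unfolding g_def using nearest_index_correct[OF k] by (intro G_set_comp_index) auto
  show "Lp_norm M p (\<lambda>x. f x - g x) = Lp_norm M p (\<lambda>x. nearest_dist c k (f x))"
    by (rule Lp_norm_cong) (simp_all add: g_dist nearest_dist_nonneg[OF k])
qed

lemma nearest_values_le_G_set:
  assumes p: "0 < p" and k: "0 < k" and f: "memLp M p f" and h: "h \<in> G_set M p k"
  shows "\<exists>a. memLp M p (\<lambda>x. nearest_dist a k (f x)) \<and>
    Lp_norm M p (\<lambda>x. nearest_dist a k (f x)) \<le> Lp_norm M p (\<lambda>x. f x - h x)"
proof -
  have [measurable]: "f \<in> borel_measurable M"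
    using f by (simp add: memLp_def)
  obtain a where a: "\<forall>x\<in>space M. \<exists>i<k. h x = a i"
    using G_set_values[OF h] by blast
  have h_Lp: "memLp M p h"
    using h unfolding G_set_def mem_Collect_eq by (rule conjunct1)
  then have [measurable]: "h \<in> borel_measurable M"
    by (simp add: memLp_def)
  have fh: "memLp M p (\<lambda>x. f x - h x)"
    by (rule memLp_bounded_by_sum[OF p f h_Lp]) simp_all
  have le: "\<bar>nearest_dist a k (f x)\<bar> \<le> \<bar>f x - h x\<bar>" if x: "x \<in> space M" for x
  proof -
    obtain i where "i < k" "h x = a i"
      using a x by auto
    then show ?thesis
      using nearest_dist_nonneg[OF k] nearest_dist_le[of i k a "f x"] by simp
  qed
  show ?thesis
    using memLp_mono[OF fh _ le] Lp_norm_mono[OF fh _ le] by auto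
qed

theorem theorem1p1:
  fixes M :: "'a measure" and p :: ennreal and k :: nat and f :: "'a \<Rightarrow> real"
  assumes "emeasure M (space M) \<noteq> 0"
    and "1 \<le> p"
    and "1 \<le> k"
    and "memLp M p f"
  shows "\<exists>g\<in>G_set M p k. Lp_norm M p (\<lambda>x. f x - g x) = D_dist M p k f"
proof -
  have p: "0 < p"
    using zero_less_one assms(2) by (rule less_le_trans)
  have k: "0 < k"
    using assms(3) by simp
  obtain c where c: "memLp M p (\<lambda>x. nearest_dist c k (f x))"
    and c_opt: "\<And>c'. memLp M p (\<lambda>x. nearest_dist c' k (f x)) \<Longrightarrow>
      Lp_norm M p (\<lambda>x. nearest_dist c k (f x)) \<le> Lp_norm M p (\<lambda>x. nearest_dist c' k (f x))"
    using exists_optimal_nearest_values[OF assms(1) p k assms(4)] by blast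
  define g where "g x = c (nearest_index c k (f x))" for x
  have g: "g \<in> G_set M p k" "Lp_norm M p (\<lambda>x. f x - g x) = Lp_norm M p (\<lambda>x. nearest_dist c k (f x))"
    unfolding g_def by (fact nearest_value_approximant[OF p k assms(4) c])+
  have "Lp_norm M p (\<lambda>x. f x - g x) \<le> Lp_norm M p (\<lambda>x. f x - h x)" if h: "h \<in> G_set M p k" for h
  proof -
    obtain a where "memLp M p (\<lambda>x. nearest_dist a k (f x))"
      and "Lp_norm M p (\<lambda>x. nearest_dist a k (f x)) \<le> Lp_norm M p (\<lambda>x. f x - h x)"
      using nearest_values_le_G_set[OF p k assms(4) h] by blast
    then show ?thesis
      using c_opt g(2) by fastforce
  qed
  then have "D_dist M p k f = Lp_norm M p (\<lambda>x. f x - g x)"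
    unfolding D_dist_def using g(1) by (intro cInf_eq_minimum) auto
  then show ?thesis
    using g(1) by auto
qed

end
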